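(* Let $n$ be a positive integer and $g=3n+1$. If $G$ is a pure $(2n)$-sparse gapset of genus $g$, then $G$ is not pseudo-symmetric.
   Context: A gapset is a finite set $G\subset\mathbb{N}=\{1,2,\dots\}$ such that whenever $z\in G$ and $z=x+y$ with $x,y\in\mathbb{N}$, then $x\in G$ or $y\in G$; its genus is $g=\#G$. Writing $G=\{\ell_1<\dots<\ell_g\}$, the Frobenius number is $F(G)=\ell_g$; $G$ is pseudo-symmetric if $F(G)=2g-2$. $G$ is pure $\kappa$-sparse if $\ell_{i+1}-\ell_i\le\kappa$ for all $i$ with equality for some $i$. *)

theory Defs
  imports Main
begin

definition gapset :: "nat set \<Rightarrow> bool" where
  "gapset G \<longleftrightarrow> finite G \<and> 0 \<notin> G \<and>
     (\<forall>z\<in>G. \<forall>x y. x > 0 \<longrightarrow> y > 0 \<longrightarrow> z = x + y \<longrightarrow> x \<in> G \<or> y \<in> G)"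

definition genus :: "nat set \<Rightarrow> nat" where
  "genus G = card G"

definition frobenius :: "nat set \<Rightarrow> nat" where
  "frobenius G = Max G"

definition pseudo_symmetric :: "nat set \<Rightarrow> bool" where
  "pseudo_symmetric G \<longleftrightarrow> G \<noteq> {} \<and> int (frobenius G) = 2 * int (genus G) - 2"

definition consecutive :: "nat set \<Rightarrow> nat \<Rightarrow> nat \<Rightarrow> bool" where
  "consecutive G a b \<longleftrightarrow> a \<in> G \<and> b \<in> G \<and> a < b \<and> (\<forall>c\<in>G. \<not> (a < c \<and> c < b))"

definition pure_sparse :: "nat \<Rightarrow> nat set \<Rightarrow> bool" where
  "pure_sparse \<kappa> G \<longleftrightarrow>
     (\<forall>a b. consecutive G a b \<longrightarrow> b - a \<le> \<kappa>) \<and>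
     (\<exists>a b. consecutive G a b \<and> b - a = \<kappa>)"

end

theory Submission
  imports Defs
begin

text \<open>Let \<open>F = 6n\<close> be the Frobenius number. In a pseudo-symmetric gapset the folding map
  \<open>y \<mapsto> min y (F - y)\<close> sends \<open>G - {F/2, F}\<close> onto \<open>{1..<F/2}\<close>, because every splitting of \<open>F\<close>
  meets \<open>G\<close>; both sets have \<open>g - 2\<close> elements, so the map is injective, i.e. \<open>x\<close> and \<open>F - x\<close> are
  never both gaps when \<open>0 < x < F/2\<close>. Let \<open>a < b\<close> be consecutive gaps with \<open>b - a = 2n\<close>. The
  divisors \<open>2n\<close> and \<open>3n\<close> of \<open>F\<close> are gaps, which forces \<open>a \<ge> 3n\<close>. Every \<open>k < 2n\<close> is a gap, as
  \<open>b = (b - k) + k\<close> and \<open>b - k\<close> is not; so \<open>b < F\<close> would make \<open>F - b\<close>, \<open>b\<close> a forbidden pair.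
  Hence \<open>b = F\<close>, and \<open>a = 4n = F - 2n\<close> is forbidden together with \<open>2n\<close>.\<close>

lemma gapset_finite: "gapset G \<Longrightarrow> finite G"
  unfolding gapset_def by blast

lemma gapset_pos: "gapset G \<Longrightarrow> y \<in> G \<Longrightarrow> 0 < y"
  unfolding gapset_def by (metis gr0I)

lemma gapset_split:
  assumes "gapset G" "z \<in> G" "0 < x" "x < z"
  shows "x \<in> G \<or> z - x \<in> G"
  using assms unfolding gapset_def by (metis le_add_diff_inverse less_imp_le zero_less_diff)

lemma gapset_dvd_mem:
  assumes "gapset G" "z \<in> G" "0 < d" "d dvd z"
  shows "d \<in> G"
  using assms(2,4)
proof (induction z rule: less_induct)
  case (less z)
  have "z \<noteq> 0" using gapset_pos[OF assms(1) less.prems(1)] by simp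
  show ?case
  proof (cases "d < z")
    case True
    then have "d \<in> G \<or> z - d \<in> G" using gapset_split[OF assms(1) less.prems(1) assms(3)] by blast
    moreover have "d dvd z - d" using less.prems(2) by (simp add: dvd_diff_nat)
    ultimately show ?thesis using less.IH[of "z - d"] True assms(3) by auto
  next
    case False
    then have "d = z" using dvd_imp_le[OF less.prems(2)] \<open>z \<noteq> 0\<close> by simp
    then show ?thesis using less.prems(1) by simp
  qed
qed

lemma gapset_mem_below_consecutive_gap:
  assumes "gapset G" "consecutive G a b" "0 < k" "k < b - a"
  shows "k \<in> G"
proof -
  have "b \<in> G" "a < b - k" "b - k < b" "\<forall>c\<in>G. \<not> (a < c \<and> c < b)"
    using assms unfolding consecutive_def by auto
  then have "b - k \<notin> G" "k < b" by auto
  then show ?thesis using gapset_split[OF assms(1) \<open>b \<in> G\<close> assms(3)] by blast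
qed

lemma gapset_frobenius_mem:
  assumes "gapset G" "G \<noteq> {}"
  shows "frobenius G \<in> G"
  using Max_in[OF gapset_finite[OF assms(1)] assms(2)] unfolding frobenius_def .

lemma gapset_le_frobenius: "gapset G \<Longrightarrow> y \<in> G \<Longrightarrow> y \<le> frobenius G"
  unfolding frobenius_def by (rule Max_ge[OF gapset_finite])

lemma consecutive_le: "consecutive G a b \<Longrightarrow> c \<in> G \<Longrightarrow> c < b \<Longrightarrow> c \<le> a"
  unfolding consecutive_def by (meson not_le)

lemma pseudo_symmetric_frobenius:
  assumes "pseudo_symmetric G"
  shows "frobenius G = 2 * (genus G - 1)" "genus G \<ge> 1"
  using assms unfolding pseudo_symmetric_def by linarith+

lemma gapset_pseudo_symmetric_not_both:
  assumes G: "gapset G" "pseudo_symmetric G"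
    and x: "x \<in> G" "0 < x" "2 * x < frobenius G"
  shows "frobenius G - x \<notin> G"
proof
  assume xF: "frobenius G - x \<in> G"
  define N where "N = genus G - 1"
  define S where "S = G - {N, 2 * N}"
  define fold where "fold y = min y (2 * N - y)" for y
  have fin: "finite G" using gapset_finite[OF G(1)] .
  have F: "frobenius G = 2 * N" "genus G = N + 1"
    using pseudo_symmetric_frobenius[OF G(2)] unfolding N_def by auto
  have FG: "2 * N \<in> G"
    using gapset_frobenius_mem[OF G(1)] G(2) F(1) unfolding pseudo_symmetric_def by simp
  have "N \<in> G" using gapset_split[OF G(1) FG, of N] x F(1) by auto
  then have card_S: "card S = N - 1"
    using FG F(2) x F(1) fin unfolding S_def genus_def by (simp add: card_Diff_subset)
  have "fold ` S \<subseteq> {1..<N}"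
  proof
    fix v assume "v \<in> fold ` S"
    then obtain y where "y \<in> S" "v = fold y" by blast
    moreover have "0 < y" "y \<le> 2 * N"
      using \<open>y \<in> S\<close> gapset_pos[OF G(1)] gapset_le_frobenius[OF G(1)] F(1) unfolding S_def by auto
    ultimately show "v \<in> {1..<N}" unfolding S_def fold_def by auto
  qed
  moreover have "{1..<N} \<subseteq> fold ` S"
  proof
    fix v assume v: "v \<in> {1..<N}"
    then have "v \<in> G \<or> 2 * N - v \<in> G" using gapset_split[OF G(1) FG, of v] by auto
    moreover have "fold v = v" "fold (2 * N - v) = v" using v unfolding fold_def by auto
    moreover have "v \<notin> {N, 2 * N}" "2 * N - v \<notin> {N, 2 * N}" using v by auto
    ultimately show "v \<in> fold ` S" unfolding S_def by (metis Diff_iff image_eqI)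
  qed
  ultimately have "fold ` S = {1..<N}" by blast
  then have "inj_on fold S"
    using card_S fin unfolding S_def by (intro eq_card_imp_inj_on) auto
  moreover have "x \<in> S" "2 * N - x \<in> S" "fold x = fold (2 * N - x)"
    using x xF F(1) unfolding S_def fold_def by auto
  ultimately show False using x(3) F(1) unfolding inj_on_def by fastforce
qed

lemma pseudo_symmetric_consecutive_eq_frobenius:
  assumes G: "gapset G" "pseudo_symmetric G"
    and ab: "consecutive G a b" "frobenius G - b < b - a" "frobenius G < 2 * b"
  shows "b = frobenius G"
proof (rule ccontr)
  assume "b \<noteq> frobenius G"
  moreover have "b \<in> G" using ab(1) unfolding consecutive_def by blast
  moreover have "b \<le> frobenius G" using gapset_le_frobenius[OF G(1) \<open>b \<in> G\<close>] .
  ultimately have pos: "0 < frobenius G - b" and "frobenius G - (frobenius G - b) = b"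
      and "2 * (frobenius G - b) < frobenius G"
    using ab(3) by linarith+
  moreover have "frobenius G - b \<in> G"
    using gapset_mem_below_consecutive_gap[OF G(1) ab(1) pos ab(2)] .
  ultimately show False
    using gapset_pseudo_symmetric_not_both[OF G _ pos] \<open>b \<in> G\<close> by simp
qed

theorem mainTheorem7:
  fixes n :: nat and G :: "nat set"
  assumes "n > 0"
    and "gapset G"
    and "genus G = 3 * n + 1"
    and "pure_sparse (2 * n) G"
  shows "\<not> pseudo_symmetric G"
proof
  assume ps: "pseudo_symmetric G"
  have F: "frobenius G = 6 * n"
    using pseudo_symmetric_frobenius(1)[OF ps] assms(3) by simp
  then have "6 * n \<in> G"
    using gapset_frobenius_mem[OF assms(2)] ps unfolding pseudo_symmetric_def by metis
  then have G23: "2 * n \<in> G" "3 * n \<in> G"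
    using gapset_dvd_mem[OF assms(2)] assms(1) by auto
  obtain a b where "consecutive G a b" "b - a = 2 * n"
    using assms(4) unfolding pure_sparse_def by blast
  then have ab: "consecutive G a b" "b = a + 2 * n"
    unfolding consecutive_def by auto
  have "0 < a" using ab(1) gapset_pos[OF assms(2)] unfolding consecutive_def by blast
  then have "2 * n \<le> a" using consecutive_le[OF ab(1) G23(1)] ab(2) by linarith
  then have "3 * n \<le> a" using consecutive_le[OF ab(1) G23(2)] ab(2) assms(1) by linarith
  then have "b = 6 * n"
    using pseudo_symmetric_consecutive_eq_frobenius[OF assms(2) ps ab(1)] F ab(2) assms(1) by simp
  then have "6 * n - 2 * n \<in> G" using ab unfolding consecutive_def by auto
  then show False
    using gapset_pseudo_symmetric_not_both[OF assms(2) ps G23(1)] F assms(1) by simp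
qed

end
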